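(* Let $c$ be $p$-homogeneous for some $p>0$, and let $m_i=\rho_i\,dx_i$ with $\rho_i$ $r_i$-homogeneous, $r_i\ge0$. Let $(\Phi_1,\dots,\Phi_N)$ maximize $\mathcal{BS}_{\alpha,m}$ over all admissible tuples (or over all admissible tuples of even functions), with $0<\mathcal{BS}_{\alpha,m}(\Phi_1,\dots,\Phi_N)<\infty$, and let $\mu_i=e^{-\alpha_i\Phi_i}m_i/\int e^{-\alpha_i\Phi_i}dm_i$. Then $$\sum_{i=1}^N\int\Phi_i\,d\mu_i=\sum_{i=1}^N\frac{n+r_i}{p\alpha_i},\qquad \sum_{i=1}^N\alpha_i\mathrm{Var}_{\mu_i}(\Phi_i)\le\sum_{i=1}^N\frac{n+r_i}{p\alpha_i}.$$ Moreover, if $\gamma$ is a probability measure on $(\mathbb{R}^n)^N$ with marginals $\mu_i$ such that $\sum_i\Phi_i(x_i)=c(x)$ for $\gamma$-a.e. $x$, then $\int c\,d\gamma=\sum_i\frac{n+r_i}{p\alpha_i}$ and $$\mathrm{Var}_\gamma(c)\le\Bigl(\sum_{i=1}^N\frac1{\alpha_i}\Bigr)\sum_{i=1}^N\alpha_i\mathrm{Var}_{\mu_i}(\Phi_i),$$ with equality if and only if $\alpha_i(\Phi_i(x_i)-\int\Phi_i d\mu_i)=\alpha_j(\Phi_j(x_j)-\int\Phi_jd\mu_j)$ for all $i,j$ and $\gamma$-a.e. $x$.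
   Context: Points of $(\mathbb{R}^n)^N$ are $x=(x_1,\dots,x_N)$. $c$ is $p$-homogeneous if $c(tx)=t^pc(x)$ for all $t\ge0$, $x$. A density $\rho$ is $r$-homogeneous if $\rho(tx)=t^r\rho(x)$ for $t>0$. A tuple $(V_i)$, $V_i:\mathbb{R}^n\to(-\infty,+\infty]$, is admissible if $\sum_iV_i(x_i)\ge c(x)$ for all $x$. $\mathcal{BS}_{\alpha,m}(V_1,\dots,V_N)=\prod_i(\int e^{-\alpha_iV_i}dm_i)^{1/\alpha_i}$ with fixed $\alpha_i>0$. $\mathrm{Var}_\mu f=\int f^2d\mu-(\int fd\mu)^2$. *)

theory Defs
  imports "HOL-Analysis.Analysis" "HOL-Probability.Probability"
begin

text \<open>Points of (R^n)^N are modelled as \<open>real^'n^'k\<close>, with n = CARD('n), N = CARD('k);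
  the i-th component x_i is \<open>x $ i\<close>.\<close>

definition homogeneous_cost :: "real \<Rightarrow> ('a::real_vector \<Rightarrow> real) \<Rightarrow> bool" where
  "homogeneous_cost p c \<longleftrightarrow> (\<forall>t x. t \<ge> 0 \<longrightarrow> c (t *\<^sub>R x) = t powr p * c x)"

definition homogeneous_density :: "real \<Rightarrow> ('a::real_vector \<Rightarrow> real) \<Rightarrow> bool" where
  "homogeneous_density r \<rho> \<longleftrightarrow> (\<forall>t x. t > 0 \<longrightarrow> \<rho> (t *\<^sub>R x) = t powr r * \<rho> x)"

definition admissible ::
  "(real^'n^'k \<Rightarrow> real) \<Rightarrow> ('k \<Rightarrow> real^'n \<Rightarrow> ereal) \<Rightarrow> bool" where
  "admissible c V \<longleftrightarrow> (\<forall>i x. V i x \<noteq> -\<infinity>) \<and>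
     (\<forall>x. (\<Sum>i\<in>UNIV. V i (x $ i)) \<ge> ereal (c x))"

definition expneg :: "real \<Rightarrow> ereal \<Rightarrow> ennreal" where
  "expneg a v = (if v = \<infinity> then 0 else ennreal (exp (- a * real_of_ereal v)))"

definition enn_powr :: "ennreal \<Rightarrow> real \<Rightarrow> ennreal" where
  "enn_powr z a = (if z = \<infinity> then \<infinity> else ennreal (enn2real z powr a))"

definition BS :: "('k::finite \<Rightarrow> real) \<Rightarrow> ('k \<Rightarrow> 'a measure) \<Rightarrow> ('k \<Rightarrow> 'a \<Rightarrow> ereal) \<Rightarrow> ennreal" where
  "BS \<alpha> m V = (\<Prod>i\<in>UNIV. enn_powr (\<integral>\<^sup>+ x. expneg (\<alpha> i) (V i x) \<partial>m i) (1 / \<alpha> i))"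

definition Var :: "'a measure \<Rightarrow> ('a \<Rightarrow> real) \<Rightarrow> real" where
  "Var M f = (\<integral>x. (f x)\<^sup>2 \<partial>M) - (\<integral>x. f x \<partial>M)\<^sup>2"

end

theory Submission
  imports Defs
begin

text \<open>
  Dilating a maximizer, \<open>\<Phi>\<^sub>i(x) \<mapsto> t^p \<Phi>\<^sub>i(x/t)\<close>, keeps it admissible since \<open>c\<close> is
  \<open>p\<close>-homogeneous, and since \<open>\<rho>\<^sub>i\<close> is \<open>r\<^sub>i\<close>-homogeneous it multiplies
  \<open>\<integral> exp(-\<alpha>\<^sub>i \<Phi>\<^sub>i) dm\<^sub>i\<close> by \<open>t^(n + r\<^sub>i)\<close> while replacing \<open>\<alpha>\<^sub>i\<close> by \<open>t^p \<alpha>\<^sub>i\<close>.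
  With \<open>K = \<Sum>\<^sub>i (n + r\<^sub>i) / (p \<alpha>\<^sub>i)\<close>, maximality among the dilations thus reads
  \<open>\<Sum>\<^sub>i ln (\<integral> exp(-\<alpha>\<^sub>i h \<Phi>\<^sub>i) d\<mu>\<^sub>i) / \<alpha>\<^sub>i \<le> -K ln (1 + h)\<close> for all \<open>h > -1\<close>,
  with equality at \<open>h = 0\<close>. Comparing the first-order terms at \<open>h = 0\<close> gives
  \<open>\<Sum>\<^sub>i \<integral> \<Phi>\<^sub>i d\<mu>\<^sub>i = K\<close>, and comparing the second-order terms gives
  \<open>\<Sum>\<^sub>i \<alpha>\<^sub>i Var(\<Phi>\<^sub>i) \<le> K\<close> (variances under \<open>\<mu>\<^sub>i\<close>); Taylor bounds for \<open>exp\<close> and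
  \<open>ln\<close> replace differentiation under the integral.
  The statements about a coupling \<open>\<gamma>\<close> follow by integrating the weighted
  Cauchy-Schwarz inequality \<open>(\<Sum>\<^sub>i y\<^sub>i)^2 \<le> (\<Sum>\<^sub>i 1/\<alpha>\<^sub>i) (\<Sum>\<^sub>i \<alpha>\<^sub>i y\<^sub>i^2)\<close>,
  an equality iff all \<open>\<alpha>\<^sub>i y\<^sub>i\<close> agree, for \<open>y\<^sub>i = \<Phi>\<^sub>i(x\<^sub>i) - \<integral> \<Phi>\<^sub>i d\<mu>\<^sub>i\<close>.
\<close>

lemma exp_ge_cubic_Taylor: "1 + y + y\<^sup>2 / 2 - \<bar>y\<bar> ^ 3 / 6 \<le> exp (y::real)"
proof -
  obtain t where "exp y = (\<Sum>m<4. y ^ m / fact m) + exp t / fact 4 * y ^ 4"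
    using Maclaurin_exp_le[of y 4] by blast
  moreover have "(\<Sum>m<4. y ^ m / fact m) = 1 + y + y\<^sup>2 / 2 + y ^ 3 / 6"
    by (simp add: numeral_eq_Suc fact_numeral power2_eq_square power3_eq_cube)
  moreover have "0 \<le> exp t / fact 4 * y ^ 4"
    by (simp add: zero_le_even_power)
  moreover have "- (\<bar>y\<bar> ^ 3) \<le> y ^ 3"
    using abs_ge_minus_self[of "y ^ 3"] by (simp add: power_abs)
  ultimately show ?thesis by linarith
qed

lemma power_le_fact_mult_exp:
  fixes x :: real
  assumes "0 \<le> x"
  shows "x ^ n \<le> fact n * exp x"
proof -
  obtain t where "exp x = (\<Sum>m<Suc n. x ^ m / fact m) + exp t / fact (Suc n) * x ^ Suc n"
    using Maclaurin_exp_le[of x "Suc n"] by blast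
  moreover have "x ^ n / fact n \<le> (\<Sum>m<Suc n. x ^ m / fact m)"
    using assms by (intro member_le_sum) auto
  moreover have "0 \<le> exp t / fact (Suc n) * x ^ Suc n"
    using assms by simp
  ultimately have "x ^ n / fact n \<le> exp x" by linarith
  then show ?thesis by (simp add: divide_le_eq mult.commute)
qed

lemma ln_one_plus_ge_quadratic:
  fixes h :: real
  assumes "0 \<le> h"
  shows "h - h\<^sup>2 / 2 \<le> ln (1 + h)"
proof -
  let ?f = "\<lambda>x::real. ln (1 + x) - x + x\<^sup>2 / 2"
  have "?f 0 \<le> ?f h"
  proof (rule DERIV_nonneg_imp_nondecreasing[OF assms])
    fix x :: real
    assume x: "0 \<le> x" "x \<le> h"
    have "DERIV ?f x :> 1 / (1 + x) - 1 + x"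
      using x by (auto intro!: derivative_eq_intros)
    moreover have "1 / (1 + x) - 1 + x = x\<^sup>2 / (1 + x)"
      using x by (simp add: field_simps power2_eq_square)
    ultimately show "\<exists>y. DERIV ?f x :> y \<and> 0 \<le> y"
      using x by auto
  qed
  then show ?thesis by simp
qed

lemma ln_one_plus_ge:
  fixes u :: real
  assumes "-1/2 \<le> u"
  shows "u - 2 * u\<^sup>2 \<le> ln (1 + u)"
proof -
  have pos: "0 < 1 + u" using assms by simp
  have "ln (1 / (1 + u)) \<le> 1 / (1 + u) - 1"
    using pos by (intro ln_le_minus_one) simp
  then have "u / (1 + u) \<le> ln (1 + u)"
    using pos by (simp add: ln_div field_simps)
  moreover have "(u - 2 * u\<^sup>2) * (1 + u) \<le> u"
    using assms mult_nonneg_nonneg[of "u\<^sup>2" "1 + 2 * u"]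
    by (simp add: algebra_simps power2_eq_square)
  then have "u - 2 * u\<^sup>2 \<le> u / (1 + u)"
    using pos by (simp add: field_simps)
  ultimately show ?thesis by linarith
qed

lemma ln_one_plus_cubic_ge:
  fixes A B h :: real
  assumes A: "0 \<le> A" and B: "0 \<le> B" and h: "0 < h" "h * (1 + 2 * B) < 1"
  shows "0 < 1 + (A * h\<^sup>2 - B * h ^ 3)"
    and "A * h\<^sup>2 - (B + 2 * (A + B)\<^sup>2) * h ^ 3 \<le> ln (1 + (A * h\<^sup>2 - B * h ^ 3))"
proof -
  define u where "u = A * h\<^sup>2 - B * h ^ 3"
  have "h + 2 * (B * h) < 1" "0 \<le> B * h"
    using h B by (simp_all add: algebra_simps)
  then have "h \<le> 1" "B * h \<le> 1/2"
    using h by linarith+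
  then have "h ^ 3 \<le> h" "h ^ 3 \<le> h\<^sup>2" "h ^ 4 \<le> h ^ 3"
    using h power_decreasing[of 1 3 h] by (simp_all add: power_decreasing)
  then have "B * h ^ 3 \<le> B * h\<^sup>2" "B * h ^ 3 \<le> B * h"
    using B by (simp_all add: mult_left_mono)
  then have Bh: "0 \<le> B * h ^ 3" "B * h ^ 3 \<le> B * h\<^sup>2" "B * h ^ 3 \<le> 1/2"
    using B h \<open>B * h \<le> 1/2\<close> by simp_all
  have Ah: "0 \<le> A * h\<^sup>2"
    using A by simp
  show "0 < 1 + (A * h\<^sup>2 - B * h ^ 3)"
    using Ah Bh by linarith
  have "\<bar>u\<bar> \<le> (A + B) * h\<^sup>2"
    using Ah Bh unfolding u_def abs_le_iff distrib_right by (intro conjI) linarith+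
  then have "u\<^sup>2 \<le> ((A + B) * h\<^sup>2)\<^sup>2"
    using abs_ge_zero[of u] by (subst power2_abs[symmetric]) (rule power_mono)
  also have "\<dots> = (A + B)\<^sup>2 * h ^ 4"
    by (simp add: power_mult_distrib flip: power_mult)
  also have "\<dots> \<le> (A + B)\<^sup>2 * h ^ 3"
    using \<open>h ^ 4 \<le> h ^ 3\<close> by (simp add: mult_left_mono)
  finally have "u\<^sup>2 \<le> (A + B)\<^sup>2 * h ^ 3" .
  moreover have "u - 2 * u\<^sup>2 \<le> ln (1 + u)"
    using Ah Bh by (intro ln_one_plus_ge) (simp add: u_def)
  ultimately show "A * h\<^sup>2 - (B + 2 * (A + B)\<^sup>2) * h ^ 3 \<le> ln (1 + (A * h\<^sup>2 - B * h ^ 3))"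
    unfolding u_def by (simp add: algebra_simps)
qed

lemma le_of_eventually_le_add_linear:
  fixes x y C :: real
  assumes "eventually (\<lambda>e. x \<le> y + C * e) (at_right 0)"
  shows "x \<le> y"
proof (rule tendsto_le[of "at_right 0"])
  show "((\<lambda>e. y + C * e) \<longlongrightarrow> y) (at_right 0)"
    by (auto intro!: tendsto_eq_intros)
qed (use assms in simp_all)

lemma slope_eq_of_ln_one_plus_le:
  fixes K S :: real
  assumes "\<And>h. -1 < h \<Longrightarrow> K * ln (1 + h) \<le> S * h"
  shows "S = K"
proof -
  have "DERIV (\<lambda>h. S * h - K * ln (1 + h)) 0 :> S - K"
    by (auto intro!: derivative_eq_intros)
  moreover have "\<forall>h. \<bar>0 - h\<bar> < 1 \<longrightarrow> S * 0 - K * ln (1 + 0) \<le> S * h - K * ln (1 + h)"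
    using assms by auto
  ultimately have "S - K = 0"
    by (rule DERIV_local_min[OF _ zero_less_one])
  then show ?thesis by simp
qed

lemma Lagrange_identity_weighted:
  fixes \<alpha> y :: "'i \<Rightarrow> real"
  assumes "\<And>i. i \<in> I \<Longrightarrow> \<alpha> i \<noteq> 0"
  shows "(\<Sum>i\<in>I. 1 / \<alpha> i) * (\<Sum>i\<in>I. \<alpha> i * (y i)\<^sup>2) - (\<Sum>i\<in>I. y i)\<^sup>2
       = (\<Sum>i\<in>I. \<Sum>j\<in>I. (\<alpha> i * y i - \<alpha> j * y j)\<^sup>2 / (\<alpha> i * \<alpha> j)) / 2"
proof -
  have "(\<Sum>i\<in>I. \<Sum>j\<in>I. (\<alpha> i * y i - \<alpha> j * y j)\<^sup>2 / (\<alpha> i * \<alpha> j))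
      = (\<Sum>i\<in>I. \<Sum>j\<in>I. \<alpha> i * (y i)\<^sup>2 / \<alpha> j + \<alpha> j * (y j)\<^sup>2 / \<alpha> i - 2 * (y i * y j))"
    using assms by (intro sum.cong refl) (simp add: field_simps power2_eq_square)
  also have "\<dots> = (\<Sum>i\<in>I. \<Sum>j\<in>I. \<alpha> i * (y i)\<^sup>2 / \<alpha> j) + (\<Sum>i\<in>I. \<Sum>j\<in>I. \<alpha> j * (y j)\<^sup>2 / \<alpha> i)
      - 2 * (\<Sum>i\<in>I. \<Sum>j\<in>I. y i * y j)"
    by (simp only: sum.distrib sum_subtractf sum_distrib_left)
  also have "(\<Sum>i\<in>I. \<Sum>j\<in>I. \<alpha> j * (y j)\<^sup>2 / \<alpha> i) = (\<Sum>i\<in>I. \<Sum>j\<in>I. \<alpha> i * (y i)\<^sup>2 / \<alpha> j)"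
    by (fact sum.swap[of "\<lambda>i j. \<alpha> j * (y j)\<^sup>2 / \<alpha> i" I I])
  also have "(\<Sum>i\<in>I. \<Sum>j\<in>I. \<alpha> i * (y i)\<^sup>2 / \<alpha> j) = (\<Sum>i\<in>I. \<alpha> i * (y i)\<^sup>2) * (\<Sum>i\<in>I. 1 / \<alpha> i)"
    by (simp add: sum_product)
  also have "(\<Sum>i\<in>I. \<Sum>j\<in>I. y i * y j) = (\<Sum>i\<in>I. y i)\<^sup>2"
    by (simp add: power2_eq_square sum_product)
  finally show ?thesis
    by (simp add: mult.commute)
qed

lemma square_sum_le_weighted:
  fixes \<alpha> y :: "'i \<Rightarrow> real"
  assumes "\<And>i. i \<in> I \<Longrightarrow> 0 < \<alpha> i"
  shows "(\<Sum>i\<in>I. y i)\<^sup>2 \<le> (\<Sum>i\<in>I. 1 / \<alpha> i) * (\<Sum>i\<in>I. \<alpha> i * (y i)\<^sup>2)"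
proof -
  have "0 \<le> (\<Sum>i\<in>I. \<Sum>j\<in>I. (\<alpha> i * y i - \<alpha> j * y j)\<^sup>2 / (\<alpha> i * \<alpha> j))"
    using assms by (intro sum_nonneg divide_nonneg_nonneg) (auto simp: less_imp_le)
  then show ?thesis
    using Lagrange_identity_weighted[of I \<alpha> y] assms by force
qed

lemma square_sum_eq_weighted_iff:
  fixes \<alpha> y :: "'i \<Rightarrow> real"
  assumes "finite I" and pos: "\<And>i. i \<in> I \<Longrightarrow> 0 < \<alpha> i"
  shows "(\<Sum>i\<in>I. y i)\<^sup>2 = (\<Sum>i\<in>I. 1 / \<alpha> i) * (\<Sum>i\<in>I. \<alpha> i * (y i)\<^sup>2)
     \<longleftrightarrow> (\<forall>i\<in>I. \<forall>j\<in>I. \<alpha> i * y i = \<alpha> j * y j)"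
proof -
  have nonneg: "0 \<le> (\<alpha> i * y i - \<alpha> j * y j)\<^sup>2 / (\<alpha> i * \<alpha> j)" if "i \<in> I" "j \<in> I" for i j
    using pos that by (simp add: less_imp_le)
  have "(\<Sum>i\<in>I. y i)\<^sup>2 = (\<Sum>i\<in>I. 1 / \<alpha> i) * (\<Sum>i\<in>I. \<alpha> i * (y i)\<^sup>2)
      \<longleftrightarrow> (\<Sum>i\<in>I. \<Sum>j\<in>I. (\<alpha> i * y i - \<alpha> j * y j)\<^sup>2 / (\<alpha> i * \<alpha> j)) = 0"
    using Lagrange_identity_weighted[of I \<alpha> y] pos by force
  also have "\<dots> \<longleftrightarrow> (\<forall>i\<in>I. \<forall>j\<in>I. (\<alpha> i * y i - \<alpha> j * y j)\<^sup>2 / (\<alpha> i * \<alpha> j) = 0)"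
    using assms nonneg by (simp add: sum_nonneg sum_nonneg_eq_0_iff)
  also have "\<dots> \<longleftrightarrow> (\<forall>i\<in>I. \<forall>j\<in>I. \<alpha> i * y i = \<alpha> j * y j)"
    using pos by (intro ball_cong refl) (simp add: less_imp_neq[symmetric])
  finally show ?thesis .
qed

lemma integrable_abs_power_of_exp:
  fixes \<psi> :: "'a \<Rightarrow> real"
  assumes [measurable]: "\<psi> \<in> borel_measurable M" and a: "0 < a"
    and "integrable M (\<lambda>x. exp (a * \<psi> x))" "integrable M (\<lambda>x. exp (- a * \<psi> x))"
  shows "integrable M (\<lambda>x. \<bar>\<psi> x\<bar> ^ n)"
proof (rule Bochner_Integration.integrable_bound)
  show "integrable M (\<lambda>x. fact n / a ^ n * (exp (a * \<psi> x) + exp (- a * \<psi> x)))"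
    using assms by simp
  show "AE x in M. norm (\<bar>\<psi> x\<bar> ^ n) \<le> norm (fact n / a ^ n * (exp (a * \<psi> x) + exp (- a * \<psi> x)))"
  proof (intro AE_I2)
    fix x
    have "(a * \<bar>\<psi> x\<bar>) ^ n \<le> fact n * exp (a * \<bar>\<psi> x\<bar>)"
      using a by (intro power_le_fact_mult_exp) simp
    also have "exp (a * \<bar>\<psi> x\<bar>) \<le> exp (a * \<psi> x) + exp (- a * \<psi> x)"
      by (cases "0 \<le> \<psi> x") (simp_all add: add_increasing add_increasing2)
    finally have "a ^ n * \<bar>\<psi> x\<bar> ^ n \<le> fact n * (exp (a * \<psi> x) + exp (- a * \<psi> x))"
      by (simp add: power_mult_distrib)
    then show "norm (\<bar>\<psi> x\<bar> ^ n) \<le> norm (fact n / a ^ n * (exp (a * \<psi> x) + exp (- a * \<psi> x)))"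
      using a by (simp add: field_simps add_pos_pos)
  qed
qed simp

lemma (in prob_space) exp_expectation_le:
  fixes X :: "'a \<Rightarrow> real"
  assumes "integrable M X" "integrable M (\<lambda>x. exp (X x))"
  shows "exp (expectation X) \<le> expectation (\<lambda>x. exp (X x))"
  using assms by (intro jensens_inequality[where I = UNIV] exp_convex) auto

lemma (in prob_space) expectation_exp_ge_cubic:
  fixes X :: "'a \<Rightarrow> real"
  assumes "0 \<le> t" and X: "integrable M X" "integrable M (\<lambda>x. (X x)\<^sup>2)"
    and X3: "integrable M (\<lambda>x. \<bar>X x - expectation X\<bar> ^ 3)"
    and "integrable M (\<lambda>x. exp (- t * X x))"
  shows "exp (- t * expectation X)
      * (1 + t\<^sup>2 / 2 * variance X - t ^ 3 / 6 * expectation (\<lambda>x. \<bar>X x - expectation X\<bar> ^ 3))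
    \<le> expectation (\<lambda>x. exp (- t * X x))"
proof -
  define m where "m = expectation X"
  define Y where "Y = (\<lambda>x. X x - m)"
  define P where "P x = exp (- t * m) * (1 - t * Y x + t\<^sup>2 / 2 * (Y x)\<^sup>2 - t ^ 3 / 6 * \<bar>Y x\<bar> ^ 3)" for x
  have Y: "integrable M Y" "integrable M (\<lambda>x. (Y x)\<^sup>2)" "integrable M (\<lambda>x. \<bar>Y x\<bar> ^ 3)"
    using X X3 by (simp_all add: Y_def m_def power2_diff)
  have "expectation P \<le> expectation (\<lambda>x. exp (- t * X x))"
  proof (rule integral_mono)
    show "integrable M P"
      unfolding P_def using Y by simp
    fix x
    have "1 + (- t * Y x) + (- t * Y x)\<^sup>2 / 2 - \<bar>- t * Y x\<bar> ^ 3 / 6 \<le> exp (- t * Y x)"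
      by (rule exp_ge_cubic_Taylor)
    then have "1 - t * Y x + t\<^sup>2 / 2 * (Y x)\<^sup>2 - t ^ 3 / 6 * \<bar>Y x\<bar> ^ 3 \<le> exp (- t * Y x)"
      using \<open>0 \<le> t\<close> by (simp add: abs_mult power_mult_distrib)
    then have "P x \<le> exp (- t * m) * exp (- t * Y x)"
      unfolding P_def by simp
    also have "\<dots> = exp (- t * X x)"
      by (simp add: Y_def exp_add[symmetric] algebra_simps)
    finally show "P x \<le> exp (- t * X x)" .
  qed fact
  moreover have "expectation Y = 0"
    using X by (simp add: Y_def m_def prob_space)
  then have "expectation P
      = exp (- t * m) * (1 + t\<^sup>2 / 2 * expectation (\<lambda>x. (Y x)\<^sup>2) - t ^ 3 / 6 * expectation (\<lambda>x. \<bar>Y x\<bar> ^ 3))"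
    unfolding P_def using Y by (simp add: prob_space)
  ultimately show ?thesis
    by (simp add: Y_def m_def)
qed

section \<open>Variance of a sum and of a coupled cost\<close>

lemma Var_cong_AE:
  fixes f g :: "'a \<Rightarrow> real"
  assumes [measurable]: "f \<in> borel_measurable M" "g \<in> borel_measurable M"
    and eq: "AE x in M. f x = g x"
  shows "Var M f = Var M g"
proof -
  have "(\<integral>x. (f x)\<^sup>2 \<partial>M) = (\<integral>x. (g x)\<^sup>2 \<partial>M)"
    using eq by (intro integral_cong_AE) auto
  moreover have "(\<integral>x. f x \<partial>M) = (\<integral>x. g x \<partial>M)"
    using eq by (intro integral_cong_AE) auto
  ultimately show ?thesis
    unfolding Var_def by simp
qed

lemma (in prob_space) Var_eq_variance:
  assumes "integrable M f" "integrable M (\<lambda>x. (f x)\<^sup>2)"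
  shows "Var M f = variance f"
  using assms by (simp add: Var_def variance_eq)

lemma integrable_square_sum:
  fixes Y :: "'i \<Rightarrow> 'a \<Rightarrow> real"
  assumes "finite I" and [measurable]: "\<And>i. i \<in> I \<Longrightarrow> Y i \<in> borel_measurable M"
    and Y2: "\<And>i. i \<in> I \<Longrightarrow> integrable M (\<lambda>x. (Y i x)\<^sup>2)"
  shows "integrable M (\<lambda>x. (\<Sum>i\<in>I. Y i x)\<^sup>2)"
proof (rule Bochner_Integration.integrable_bound)
  show "integrable M (\<lambda>x. real (card I) * (\<Sum>i\<in>I. (Y i x)\<^sup>2))"
    using Y2 by simp
  show "AE x in M. norm ((\<Sum>i\<in>I. Y i x)\<^sup>2) \<le> norm (real (card I) * (\<Sum>i\<in>I. (Y i x)\<^sup>2))"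
    using square_sum_le_weighted[of I "\<lambda>_. 1"] by (simp add: sum_nonneg)
qed (use assms in simp)

lemma (in prob_space) variance_sum_weighted:
  fixes Y :: "'i::finite \<Rightarrow> 'a \<Rightarrow> real" and \<alpha> :: "'i \<Rightarrow> real"
  assumes Y: "\<And>i. integrable M (Y i)" "\<And>i. integrable M (\<lambda>x. (Y i x)\<^sup>2)"
    and \<alpha>: "\<And>i. 0 < \<alpha> i"
  shows variance_sum_le_weighted:
      "variance (\<lambda>x. \<Sum>i\<in>UNIV. Y i x) \<le> (\<Sum>i\<in>UNIV. 1 / \<alpha> i) * (\<Sum>i\<in>UNIV. \<alpha> i * variance (Y i))"
    and variance_sum_eq_weighted_iff:
      "variance (\<lambda>x. \<Sum>i\<in>UNIV. Y i x) = (\<Sum>i\<in>UNIV. 1 / \<alpha> i) * (\<Sum>i\<in>UNIV. \<alpha> i * variance (Y i))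
       \<longleftrightarrow> (AE x in M. \<forall>i j. \<alpha> i * (Y i x - expectation (Y i)) = \<alpha> j * (Y j x - expectation (Y j)))"
proof -
  define y where "y i x = Y i x - expectation (Y i)" for i x
  define D where "D = (\<lambda>x. (\<Sum>i\<in>UNIV. 1 / \<alpha> i) * (\<Sum>i\<in>UNIV. \<alpha> i * (y i x)\<^sup>2) - (\<Sum>i\<in>UNIV. y i x)\<^sup>2)"
  have y2: "integrable M (\<lambda>x. (y i x)\<^sup>2)" for i
    using Y by (simp add: y_def power2_diff)
  have D_nonneg: "0 \<le> D x" for x
    using square_sum_le_weighted[of UNIV \<alpha> "\<lambda>i. y i x"] \<alpha> by (simp add: D_def)
  have sum_y2: "integrable M (\<lambda>x. (\<Sum>i\<in>UNIV. y i x)\<^sup>2)"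
    using Y y2 by (intro integrable_square_sum) (auto simp: y_def borel_measurable_integrable)
  have "expectation (\<lambda>x. \<Sum>i\<in>UNIV. Y i x) = (\<Sum>i\<in>UNIV. expectation (Y i))"
    using Y by (intro Bochner_Integration.integral_sum) auto
  then have "variance (\<lambda>x. \<Sum>i\<in>UNIV. Y i x) = expectation (\<lambda>x. (\<Sum>i\<in>UNIV. y i x)\<^sup>2)"
    by (simp only: y_def sum_subtractf)
  moreover have "(\<Sum>i\<in>UNIV. \<alpha> i * variance (Y i)) = expectation (\<lambda>x. \<Sum>i\<in>UNIV. \<alpha> i * (y i x)\<^sup>2)"
    using y2 by (subst Bochner_Integration.integral_sum) (auto simp: y_def)
  ultimately have defect: "(\<Sum>i\<in>UNIV. 1 / \<alpha> i) * (\<Sum>i\<in>UNIV. \<alpha> i * variance (Y i))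
      - variance (\<lambda>x. \<Sum>i\<in>UNIV. Y i x) = expectation D"
    using y2 sum_y2 unfolding D_def by (subst Bochner_Integration.integral_diff) auto
  have "0 \<le> expectation D"
    using D_nonneg by simp
  then show "variance (\<lambda>x. \<Sum>i\<in>UNIV. Y i x) \<le> (\<Sum>i\<in>UNIV. 1 / \<alpha> i) * (\<Sum>i\<in>UNIV. \<alpha> i * variance (Y i))"
    using defect by linarith
  have "integrable M D"
    using y2 sum_y2 by (simp add: D_def)
  then have "expectation D = 0 \<longleftrightarrow> (AE x in M. D x = 0)"
    using D_nonneg by (intro integral_nonneg_eq_0_iff_AE) auto
  also have "\<dots> \<longleftrightarrow> (AE x in M. \<forall>i j. \<alpha> i * y i x = \<alpha> j * y j x)"
  proof (rule AE_cong)
    fix x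
    have "D x = 0 \<longleftrightarrow> (\<Sum>i\<in>UNIV. y i x)\<^sup>2 = (\<Sum>i\<in>UNIV. 1 / \<alpha> i) * (\<Sum>i\<in>UNIV. \<alpha> i * (y i x)\<^sup>2)"
      by (auto simp: D_def)
    then show "D x = 0 \<longleftrightarrow> (\<forall>i j. \<alpha> i * y i x = \<alpha> j * y j x)"
      using square_sum_eq_weighted_iff[of UNIV \<alpha> "\<lambda>i. y i x"] \<alpha> by simp
  qed
  finally show "variance (\<lambda>x. \<Sum>i\<in>UNIV. Y i x) = (\<Sum>i\<in>UNIV. 1 / \<alpha> i) * (\<Sum>i\<in>UNIV. \<alpha> i * variance (Y i))
      \<longleftrightarrow> (AE x in M. \<forall>i j. \<alpha> i * (Y i x - expectation (Y i)) = \<alpha> j * (Y j x - expectation (Y j)))"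
    using defect by (auto simp: y_def)
qed

lemma Var_distr:
  assumes "g \<in> M \<rightarrow>\<^sub>M N" "f \<in> borel_measurable N"
  shows "Var (distr M N g) f = Var M (\<lambda>x. f (g x))"
  using assms by (simp add: Var_def integral_distr)

lemma coupling_cost_moments:
  fixes \<gamma> :: "'b measure" and \<pi> :: "'i::finite \<Rightarrow> 'b \<Rightarrow> 'a" and \<phi> :: "'i \<Rightarrow> 'a \<Rightarrow> real"
    and c :: "'b \<Rightarrow> real" and \<alpha> :: "'i \<Rightarrow> real"
  assumes "prob_space \<gamma>"
    and [measurable]: "\<And>i. \<pi> i \<in> \<gamma> \<rightarrow>\<^sub>M N" and marginal: "\<And>i. distr \<gamma> N (\<pi> i) = \<mu> i"
    and [measurable]: "\<And>i. \<phi> i \<in> borel_measurable N"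
    and \<phi>: "\<And>i. integrable (\<mu> i) (\<phi> i)" "\<And>i. integrable (\<mu> i) (\<lambda>x. (\<phi> i x)\<^sup>2)"
    and [measurable]: "c \<in> borel_measurable \<gamma>"
    and c_eq: "AE x in \<gamma>. c x = (\<Sum>i\<in>UNIV. \<phi> i (\<pi> i x))"
    and \<alpha>: "\<And>i. 0 < \<alpha> i"
  shows "integrable \<gamma> c" "integrable \<gamma> (\<lambda>x. (c x)\<^sup>2)"
    and "(\<integral>x. c x \<partial>\<gamma>) = (\<Sum>i\<in>UNIV. \<integral>x. \<phi> i x \<partial>\<mu> i)"
    and "Var \<gamma> c \<le> (\<Sum>i\<in>UNIV. 1 / \<alpha> i) * (\<Sum>i\<in>UNIV. \<alpha> i * Var (\<mu> i) (\<phi> i))"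
    and "Var \<gamma> c = (\<Sum>i\<in>UNIV. 1 / \<alpha> i) * (\<Sum>i\<in>UNIV. \<alpha> i * Var (\<mu> i) (\<phi> i))
       \<longleftrightarrow> (AE x in \<gamma>. \<forall>i j. \<alpha> i * (\<phi> i (\<pi> i x) - (\<integral>y. \<phi> i y \<partial>\<mu> i))
                          = \<alpha> j * (\<phi> j (\<pi> j x) - (\<integral>y. \<phi> j y \<partial>\<mu> j)))"
proof -
  interpret prob_space \<gamma> by fact
  have Y: "integrable \<gamma> (\<lambda>x. \<phi> i (\<pi> i x))" "integrable \<gamma> (\<lambda>x. (\<phi> i (\<pi> i x))\<^sup>2)" for i
    using \<phi> by (simp_all add: integrable_distr_eq flip: marginal)
  have EY: "expectation (\<lambda>x. \<phi> i (\<pi> i x)) = (\<integral>x. \<phi> i x \<partial>\<mu> i)" for i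
    by (simp add: integral_distr flip: marginal)
  have VY: "variance (\<lambda>x. \<phi> i (\<pi> i x)) = Var (\<mu> i) (\<phi> i)" for i
    using Y by (simp add: Var_distr Var_eq_variance flip: marginal)
  have S: "integrable \<gamma> (\<lambda>x. \<Sum>i\<in>UNIV. \<phi> i (\<pi> i x))" "integrable \<gamma> (\<lambda>x. (\<Sum>i\<in>UNIV. \<phi> i (\<pi> i x))\<^sup>2)"
    using Y by (auto intro: integrable_square_sum)
  have c2_eq: "AE x in \<gamma>. (c x)\<^sup>2 = (\<Sum>i\<in>UNIV. \<phi> i (\<pi> i x))\<^sup>2"
    using c_eq by eventually_elim simp
  show "integrable \<gamma> c" "integrable \<gamma> (\<lambda>x. (c x)\<^sup>2)"
    using S integrable_cong_AE[OF _ _ c_eq] integrable_cong_AE[OF _ _ c2_eq] by simp_all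
  have "(\<integral>x. c x \<partial>\<gamma>) = (\<integral>x. (\<Sum>i\<in>UNIV. \<phi> i (\<pi> i x)) \<partial>\<gamma>)"
    using c_eq by (intro integral_cong_AE) auto
  then show "(\<integral>x. c x \<partial>\<gamma>) = (\<Sum>i\<in>UNIV. \<integral>x. \<phi> i x \<partial>\<mu> i)"
    using Y by (simp add: EY)
  have "Var \<gamma> c = Var \<gamma> (\<lambda>x. \<Sum>i\<in>UNIV. \<phi> i (\<pi> i x))"
    using c_eq by (intro Var_cong_AE) auto
  also have "\<dots> = variance (\<lambda>x. \<Sum>i\<in>UNIV. \<phi> i (\<pi> i x))"
    using S by (rule Var_eq_variance)
  finally show "Var \<gamma> c \<le> (\<Sum>i\<in>UNIV. 1 / \<alpha> i) * (\<Sum>i\<in>UNIV. \<alpha> i * Var (\<mu> i) (\<phi> i))"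
    and "Var \<gamma> c = (\<Sum>i\<in>UNIV. 1 / \<alpha> i) * (\<Sum>i\<in>UNIV. \<alpha> i * Var (\<mu> i) (\<phi> i))
       \<longleftrightarrow> (AE x in \<gamma>. \<forall>i j. \<alpha> i * (\<phi> i (\<pi> i x) - (\<integral>y. \<phi> i y \<partial>\<mu> i))
                          = \<alpha> j * (\<phi> j (\<pi> j x) - (\<integral>y. \<phi> j y \<partial>\<mu> j)))"
    using variance_sum_le_weighted[where Y = "\<lambda>i x. \<phi> i (\<pi> i x)" and \<alpha> = \<alpha>, OF Y \<alpha>]
      variance_sum_eq_weighted_iff[where Y = "\<lambda>i x. \<phi> i (\<pi> i x)" and \<alpha> = \<alpha>, OF Y \<alpha>]
    unfolding VY unfolding EY by simp_all
qed

section \<open>Consequences of a bound on log-Laplace transforms\<close>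

locale log_Laplace_bound =
  fixes \<mu> :: "'i::finite \<Rightarrow> 'a measure" and \<phi> :: "'i \<Rightarrow> 'a \<Rightarrow> real"
    and \<alpha> :: "'i \<Rightarrow> real" and K :: real
  assumes prob_space_\<mu>: "\<And>i. prob_space (\<mu> i)"
    and \<phi>_measurable [measurable]: "\<And>i. \<phi> i \<in> borel_measurable (\<mu> i)"
    and \<alpha>_pos: "\<And>i. 0 < \<alpha> i"
    and K_nonneg: "0 \<le> K"
    and integrable_exp: "\<And>i h. -1 < h \<Longrightarrow> integrable (\<mu> i) (\<lambda>x. exp (- \<alpha> i * h * \<phi> i x))"
    and sum_ln_Laplace_le: "\<And>h. -1 < h \<Longrightarrow>
      (\<Sum>i\<in>UNIV. ln (\<integral>x. exp (- \<alpha> i * h * \<phi> i x) \<partial>\<mu> i) / \<alpha> i) \<le> - K * ln (1 + h)"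
begin

lemma integrable_abs_power: "integrable (\<mu> i) (\<lambda>x. \<bar>\<phi> i x - c\<bar> ^ n)"
proof (rule integrable_abs_power_of_exp)
  show "0 < \<alpha> i / 2"
    using \<alpha>_pos[of i] by simp
  have "(\<lambda>x. exp (\<alpha> i / 2 * (\<phi> i x - c))) = (\<lambda>x. exp (- \<alpha> i * c / 2) * exp (- \<alpha> i * (-1/2) * \<phi> i x))"
    by (simp add: fun_eq_iff mult_exp_exp field_simps)
  then show "integrable (\<mu> i) (\<lambda>x. exp (\<alpha> i / 2 * (\<phi> i x - c)))"
    using integrable_exp[of "-1/2" i] by simp
  have "(\<lambda>x. exp (- (\<alpha> i / 2) * (\<phi> i x - c))) = (\<lambda>x. exp (\<alpha> i * c / 2) * exp (- \<alpha> i * (1/2) * \<phi> i x))"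
    by (simp add: fun_eq_iff mult_exp_exp field_simps)
  then show "integrable (\<mu> i) (\<lambda>x. exp (- (\<alpha> i / 2) * (\<phi> i x - c)))"
    using integrable_exp[of "1/2" i] by simp
qed measurable

lemma integrable_\<phi>: "integrable (\<mu> i) (\<phi> i)"
  using integrable_abs_power[of i 0 1] by (simp add: integrable_abs_iff)

lemma integrable_\<phi>_square: "integrable (\<mu> i) (\<lambda>x. (\<phi> i x)\<^sup>2)"
  using integrable_abs_power[of i 0 2] by simp

lemma exp_mean_le_Laplace:
  assumes "-1 < h"
  shows "exp (- \<alpha> i * h * (\<integral>x. \<phi> i x \<partial>\<mu> i)) \<le> (\<integral>x. exp (- \<alpha> i * h * \<phi> i x) \<partial>\<mu> i)"
proof -
  interpret prob_space "\<mu> i" by (rule prob_space_\<mu>)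
  have "exp (expectation (\<lambda>x. - \<alpha> i * h * \<phi> i x)) \<le> expectation (\<lambda>x. exp (- \<alpha> i * h * \<phi> i x))"
    using integrable_\<phi> integrable_exp[OF assms] by (intro exp_expectation_le) auto
  then show ?thesis
    by simp
qed

lemma Laplace_pos: "-1 < h \<Longrightarrow> 0 < (\<integral>x. exp (- \<alpha> i * h * \<phi> i x) \<partial>\<mu> i)"
  using exp_mean_le_Laplace exp_gt_zero order_less_le_trans by blast

lemma ln_Laplace_ge_mean:
  "-1 < h \<Longrightarrow> - \<alpha> i * h * (\<integral>x. \<phi> i x \<partial>\<mu> i) \<le> ln (\<integral>x. exp (- \<alpha> i * h * \<phi> i x) \<partial>\<mu> i)"
  using exp_mean_le_Laplace Laplace_pos by (simp add: ln_ge_iff)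

lemma sum_expectation_eq: "(\<Sum>i\<in>UNIV. \<integral>x. \<phi> i x \<partial>\<mu> i) = K"
proof (rule slope_eq_of_ln_one_plus_le)
  fix h :: real
  assume h: "-1 < h"
  have "(\<Sum>i\<in>UNIV. - h * (\<integral>x. \<phi> i x \<partial>\<mu> i))
      \<le> (\<Sum>i\<in>UNIV. ln (\<integral>x. exp (- \<alpha> i * h * \<phi> i x) \<partial>\<mu> i) / \<alpha> i)"
  proof (rule sum_mono)
    fix i
    show "- h * (\<integral>x. \<phi> i x \<partial>\<mu> i) \<le> ln (\<integral>x. exp (- \<alpha> i * h * \<phi> i x) \<partial>\<mu> i) / \<alpha> i"
      using ln_Laplace_ge_mean[OF h, of i] \<alpha>_pos[of i] by (simp add: field_simps)
  qed
  also have "\<dots> \<le> - K * ln (1 + h)"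
    using h by (rule sum_ln_Laplace_le)
  finally show "K * ln (1 + h) \<le> (\<Sum>i\<in>UNIV. \<integral>x. \<phi> i x \<partial>\<mu> i) * h"
    by (simp add: sum_negf sum_distrib_left mult.commute)
qed

lemma Laplace_ge_cubic:
  assumes "0 \<le> h"
  shows "exp (- \<alpha> i * h * (\<integral>x. \<phi> i x \<partial>\<mu> i)) * (1 + (\<alpha> i)\<^sup>2 * Var (\<mu> i) (\<phi> i) / 2 * h\<^sup>2
      - (\<alpha> i) ^ 3 * (\<integral>x. \<bar>\<phi> i x - (\<integral>y. \<phi> i y \<partial>\<mu> i)\<bar> ^ 3 \<partial>\<mu> i) / 6 * h ^ 3)
    \<le> (\<integral>x. exp (- \<alpha> i * h * \<phi> i x) \<partial>\<mu> i)"
proof -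
  interpret prob_space "\<mu> i" by (rule prob_space_\<mu>)
  have "Var (\<mu> i) (\<phi> i) = variance (\<phi> i)"
    using integrable_\<phi> integrable_\<phi>_square by (rule Var_eq_variance)
  then show ?thesis
    using expectation_exp_ge_cubic[of "\<alpha> i * h" "\<phi> i"] assms \<alpha>_pos[of i]
      integrable_\<phi> integrable_\<phi>_square integrable_abs_power integrable_exp[of h i]
    by (simp add: power_mult_distrib algebra_simps)
qed

lemma ln_Laplace_ge_quadratic:
  obtains C where "eventually (\<lambda>h. (\<alpha> i)\<^sup>2 * Var (\<mu> i) (\<phi> i) / 2 * h\<^sup>2 - C * h ^ 3
      \<le> ln (\<integral>x. exp (- \<alpha> i * h * \<phi> i x) \<partial>\<mu> i) + \<alpha> i * h * (\<integral>x. \<phi> i x \<partial>\<mu> i)) (at_right 0)"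
proof -
  interpret prob_space "\<mu> i" by (rule prob_space_\<mu>)
  define m where "m = expectation (\<phi> i)"
  define A where "A = (\<alpha> i)\<^sup>2 * Var (\<mu> i) (\<phi> i) / 2"
  define B where "B = (\<alpha> i) ^ 3 * expectation (\<lambda>x. \<bar>\<phi> i x - m\<bar> ^ 3) / 6"
  have A: "0 \<le> A"
    using integrable_\<phi> integrable_\<phi>_square by (simp add: A_def Var_eq_variance)
  have B: "0 \<le> B"
    using \<alpha>_pos[of i] by (simp add: B_def)
  have ln_bound: "A * h\<^sup>2 - (B + 2 * (A + B)\<^sup>2) * h ^ 3
      \<le> ln (\<integral>x. exp (- \<alpha> i * h * \<phi> i x) \<partial>\<mu> i) + \<alpha> i * h * m"
    if h: "0 < h" "h < 1 / (1 + 2 * B)" for h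
  proof -
    have "h * (1 + 2 * B) < 1"
      using h B by (simp add: field_simps)
    note cubic = ln_one_plus_cubic_ge[OF A B h(1) this]
    have "A * h\<^sup>2 - (B + 2 * (A + B)\<^sup>2) * h ^ 3 \<le> ln (1 + (A * h\<^sup>2 - B * h ^ 3))"
      by (fact cubic(2))
    also have "\<dots> \<le> ln (exp (\<alpha> i * h * m) * (\<integral>x. exp (- \<alpha> i * h * \<phi> i x) \<partial>\<mu> i))"
    proof (rule ln_mono)
      have "exp (- (\<alpha> i * h) * m) * (1 + (A * h\<^sup>2 - B * h ^ 3)) \<le> (\<integral>x. exp (- \<alpha> i * h * \<phi> i x) \<partial>\<mu> i)"
        using Laplace_ge_cubic[of h i] h by (simp add: A_def B_def m_def algebra_simps)
      then show "1 + (A * h\<^sup>2 - B * h ^ 3) \<le> exp (\<alpha> i * h * m) * (\<integral>x. exp (- \<alpha> i * h * \<phi> i x) \<partial>\<mu> i)"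
        by (simp add: exp_minus field_simps)
    qed (fact cubic(1))
    also have "\<dots> = \<alpha> i * h * m + ln (\<integral>x. exp (- \<alpha> i * h * \<phi> i x) \<partial>\<mu> i)"
      using Laplace_pos[of h i] h by (simp add: ln_mult)
    finally show ?thesis
      by simp
  qed
  show ?thesis
  proof (rule that, unfold eventually_at_right_field, intro exI conjI allI impI)
    show "0 < 1 / (1 + 2 * B)"
      using B by simp
  qed (use ln_bound in \<open>simp add: A_def m_def\<close>)
qed

text \<open>Both sides of \<open>sum_ln_Laplace_le\<close> vanish at \<open>h = 0\<close> and their first-order
  terms agree by \<open>sum_expectation_eq\<close>, so the \<open>h\<^sup>2\<close> coefficients compare as \<open>h \<rightarrow> 0+\<close>.\<close>

lemma sum_weighted_Var_le: "(\<Sum>i\<in>UNIV. \<alpha> i * Var (\<mu> i) (\<phi> i)) \<le> K"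
proof -
  define lower where "lower i C h \<longleftrightarrow> (\<alpha> i)\<^sup>2 * Var (\<mu> i) (\<phi> i) / 2 * h\<^sup>2 - C * h ^ 3
      \<le> ln (\<integral>x. exp (- \<alpha> i * h * \<phi> i x) \<partial>\<mu> i) + \<alpha> i * h * (\<integral>x. \<phi> i x \<partial>\<mu> i)" for i C h
  have "\<forall>i. \<exists>C. eventually (lower i C) (at_right 0)"
    using ln_Laplace_ge_quadratic unfolding lower_def by blast
  from choice[OF this] obtain C where "\<forall>i. eventually (lower i (C i)) (at_right 0)"
    by blast
  then have C: "eventually (\<lambda>h. \<forall>i. lower i (C i) h) (at_right 0)"
    by (intro eventually_all_finite) blast
  let ?V = "\<Sum>i\<in>UNIV. \<alpha> i * Var (\<mu> i) (\<phi> i)" and ?C = "\<Sum>i\<in>UNIV. C i / \<alpha> i"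
  have "eventually (\<lambda>h. ?V / 2 \<le> K / 2 + ?C * h) (at_right 0)"
    using C eventually_at_right_less[of 0]
  proof eventually_elim
    case (elim h)
    have "h\<^sup>2 * (?V / 2) - h ^ 3 * ?C
        = (\<Sum>i\<in>UNIV. ((\<alpha> i)\<^sup>2 * Var (\<mu> i) (\<phi> i) / 2 * h\<^sup>2 - C i * h ^ 3) / \<alpha> i)"
      using \<alpha>_pos by (simp add: sum_subtractf sum_distrib_left sum_divide_distrib power2_eq_square
          diff_divide_distrib less_imp_neq[symmetric] mult_ac)
    also have "\<dots> \<le> (\<Sum>i\<in>UNIV. (ln (\<integral>x. exp (- \<alpha> i * h * \<phi> i x) \<partial>\<mu> i) + \<alpha> i * h * (\<integral>x. \<phi> i x \<partial>\<mu> i)) / \<alpha> i)"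
      using elim(1) \<alpha>_pos by (intro sum_mono divide_right_mono) (auto simp: lower_def less_imp_le)
    also have "\<dots> = (\<Sum>i\<in>UNIV. ln (\<integral>x. exp (- \<alpha> i * h * \<phi> i x) \<partial>\<mu> i) / \<alpha> i) + h * K"
      using \<alpha>_pos by (simp add: add_divide_distrib sum.distrib sum_distrib_left less_imp_neq[symmetric]
          flip: sum_expectation_eq)
    also have "\<dots> \<le> - K * ln (1 + h) + h * K"
      using sum_ln_Laplace_le[of h] elim(2) by simp
    also have "\<dots> \<le> h\<^sup>2 * (K / 2)"
    proof -
      have "K * (h - h\<^sup>2 / 2) \<le> K * ln (1 + h)"
        using ln_one_plus_ge_quadratic[of h] elim(2) K_nonneg by (intro mult_left_mono) auto
      then show ?thesis
        by (simp add: algebra_simps)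
    qed
    finally have "h\<^sup>2 * (?V / 2) \<le> h\<^sup>2 * (K / 2 + ?C * h)"
      by (simp add: distrib_left power2_eq_square power3_eq_cube mult_ac)
    then show ?case
      using elim(2) by simp
  qed
  then have "?V / 2 \<le> K / 2"
    by (rule le_of_eventually_le_add_linear)
  then show ?thesis
    by simp
qed

end

section \<open>Dilations and maximizers of the Brascamp-Lieb functional\<close>

lemma expneg_borel [measurable]: "expneg a \<in> borel_measurable borel"
proof -
  have [measurable]: "{\<infinity>::ereal} \<in> sets borel"
    by simp
  show ?thesis
    unfolding expneg_def[abs_def] by measurable
qed

lemma expneg_eq_0_iff: "expneg a v = 0 \<longleftrightarrow> v = \<infinity>"
  by (simp add: expneg_def)

lemma expneg_ereal_mult: "0 < s \<Longrightarrow> expneg a (ereal s * v) = expneg (a * s) v"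
  by (cases v) (auto simp: expneg_def mult_ac)

lemma expneg_mult_exp:
  "expneg a v * ennreal (exp (- a * h * real_of_ereal v)) = expneg (a * (1 + h)) v"
  by (cases v) (auto simp: expneg_def ennreal_mult[symmetric] exp_add[symmetric] algebra_simps)

lemma enn_powr_ennreal: "0 \<le> x \<Longrightarrow> enn_powr (ennreal x) a = ennreal (x powr a)"
  by (simp add: enn_powr_def)

lemma enn_powr_eq_0_iff: "enn_powr z a = 0 \<longleftrightarrow> z = 0"
  by (cases z) (auto simp: enn_powr_def)

lemma enn_powr_eq_top_iff: "enn_powr z a = \<top> \<longleftrightarrow> z = \<top>"
  by (cases z) (auto simp: enn_powr_def)

lemma BS_eq_ennreal:
  assumes "\<And>i. (\<integral>\<^sup>+x. expneg (\<alpha> i) (V i x) \<partial>m i) = ennreal (w i)" and "\<And>i. 0 \<le> w i"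
  shows "BS \<alpha> m V = ennreal (\<Prod>i\<in>UNIV. w i powr (1 / \<alpha> i))"
  using assms by (simp add: BS_def enn_powr_ennreal prod_ennreal)

lemma ln_prod_powr:
  fixes w a :: "'i \<Rightarrow> real"
  assumes "finite I" "\<And>i. i \<in> I \<Longrightarrow> 0 < w i"
  shows "ln (\<Prod>i\<in>I. w i powr a i) = (\<Sum>i\<in>I. a i * ln (w i))"
proof -
  have "ln (\<Prod>i\<in>I. w i powr a i) = (\<Sum>i\<in>I. ln (w i powr a i))"
    using assms by (intro ln_prod) (simp_all add: less_imp_neq[symmetric])
  also have "\<dots> = (\<Sum>i\<in>I. a i * ln (w i))"
    using assms by (intro sum.cong) (simp_all add: ln_powr less_imp_neq[symmetric])
  finally show ?thesis .
qed

definition dilate :: "real \<Rightarrow> real \<Rightarrow> ('k \<Rightarrow> 'a::real_vector \<Rightarrow> ereal) \<Rightarrow> 'k \<Rightarrow> 'a \<Rightarrow> ereal" where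
  "dilate p t V i x = ereal (t powr p) * V i ((1 / t) *\<^sub>R x)"

lemma admissible_dilate:
  fixes c :: "real^'n^'k \<Rightarrow> real" and V :: "'k \<Rightarrow> real^'n \<Rightarrow> ereal"
  assumes t: "0 < t" and c: "homogeneous_cost p c" and V: "admissible c V"
  shows "admissible c (dilate p t V)"
  unfolding admissible_def
proof (intro conjI allI)
  fix i x
  have "V i ((1 / t) *\<^sub>R x) \<noteq> - \<infinity>"
    using V by (simp add: admissible_def)
  then show "dilate p t V i x \<noteq> - \<infinity>"
    using t by (cases "V i ((1 / t) *\<^sub>R x)") (auto simp: dilate_def)
next
  fix x :: "real^'n^'k"
  have "ereal (c ((1 / t) *\<^sub>R x)) \<le> (\<Sum>i\<in>UNIV. V i (((1 / t) *\<^sub>R x) $ i))"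
    using V unfolding admissible_def by blast
  then have "ereal (c ((1 / t) *\<^sub>R x)) \<le> (\<Sum>i\<in>UNIV. V i ((1 / t) *\<^sub>R (x $ i)))"
    by simp
  then have "ereal (c ((1 / t) *\<^sub>R x)) * ereal (t powr p) \<le> (\<Sum>i\<in>UNIV. V i ((1 / t) *\<^sub>R (x $ i))) * ereal (t powr p)"
    by (intro ereal_mult_right_mono) auto
  moreover have "c ((1 / t) *\<^sub>R x) * t powr p = c x"
    using c t by (simp add: homogeneous_cost_def powr_divide)
  moreover have "(\<Sum>i\<in>UNIV. V i ((1 / t) *\<^sub>R (x $ i))) * ereal (t powr p) = (\<Sum>i\<in>UNIV. dilate p t V i (x $ i))"
    unfolding dilate_def sum_distrib_right_ereal[OF powr_ge_zero] by (simp add: mult.commute)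
  ultimately show "ereal (c x) \<le> (\<Sum>i\<in>UNIV. dilate p t V i (x $ i))"
    by (simp add: mult.commute)
qed

lemma nn_integral_expneg_dilate:
  fixes \<rho> :: "'a::euclidean_space \<Rightarrow> real" and \<Phi> :: "'a \<Rightarrow> ereal" and r :: real
  assumes t: "0 < t" and [measurable]: "\<rho> \<in> borel_measurable borel" "\<Phi> \<in> borel_measurable borel"
    and \<rho>_nonneg: "\<And>x. 0 \<le> \<rho> x" and \<rho>_hom: "homogeneous_density r \<rho>"
  shows "(\<integral>\<^sup>+x. expneg a (ereal (t powr p) * \<Phi> ((1 / t) *\<^sub>R x)) \<partial>density lborel (\<lambda>x. ennreal (\<rho> x)))
    = ennreal (t powr (real DIM('a) + r)) * (\<integral>\<^sup>+x. expneg (a * t powr p) (\<Phi> x) \<partial>density lborel (\<lambda>x. ennreal (\<rho> x)))"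
proof -
  have "(\<integral>\<^sup>+x. expneg a (ereal (t powr p) * \<Phi> ((1 / t) *\<^sub>R x)) \<partial>density lborel (\<lambda>x. ennreal (\<rho> x)))
      = (\<integral>\<^sup>+x. ennreal (\<rho> x) * expneg a (ereal (t powr p) * \<Phi> ((1 / t) *\<^sub>R x)) \<partial>lborel)"
    by (simp add: nn_integral_density)
  also have "\<dots> = (\<integral>\<^sup>+y. ennreal (\<bar>t\<bar> ^ DIM('a)) * (ennreal (\<rho> (0 + t *\<^sub>R y))
      * expneg a (ereal (t powr p) * \<Phi> ((1 / t) *\<^sub>R (0 + t *\<^sub>R y)))) \<partial>lborel)"
    using t by (subst lborel_affine[of t 0]) (simp_all add: nn_integral_density nn_integral_distr)
  also have "\<dots> = (\<integral>\<^sup>+y. ennreal (t powr (real DIM('a) + r)) * (ennreal (\<rho> y) * expneg (a * t powr p) (\<Phi> y)) \<partial>lborel)"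
  proof (rule nn_integral_cong)
    fix y
    have "\<rho> (t *\<^sub>R y) = t powr r * \<rho> y"
      using \<rho>_hom t by (simp add: homogeneous_density_def)
    then have "ennreal (\<bar>t\<bar> ^ DIM('a)) * ennreal (\<rho> (0 + t *\<^sub>R y)) = ennreal (t powr (real DIM('a) + r)) * ennreal (\<rho> y)"
      using t \<rho>_nonneg by (simp add: powr_add powr_realpow ennreal_mult'[symmetric] mult_ac)
    then show "ennreal (\<bar>t\<bar> ^ DIM('a)) * (ennreal (\<rho> (0 + t *\<^sub>R y)) * expneg a (ereal (t powr p) * \<Phi> ((1 / t) *\<^sub>R (0 + t *\<^sub>R y))))
        = ennreal (t powr (real DIM('a) + r)) * (ennreal (\<rho> y) * expneg (a * t powr p) (\<Phi> y))"
      using t by (simp add: expneg_ereal_mult mult.assoc[symmetric])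
  qed
  also have "\<dots> = ennreal (t powr (real DIM('a) + r)) * (\<integral>\<^sup>+y. expneg (a * t powr p) (\<Phi> y) \<partial>density lborel (\<lambda>x. ennreal (\<rho> x)))"
    by (simp add: nn_integral_cmult nn_integral_density)
  finally show ?thesis .
qed

locale BS_maximizer =
  fixes c :: "real^'n^'k \<Rightarrow> real"
    and p :: real
    and \<rho> :: "'k \<Rightarrow> real^'n \<Rightarrow> real"
    and r \<alpha> :: "'k \<Rightarrow> real"
    and \<Phi> :: "'k \<Rightarrow> real^'n \<Rightarrow> ereal"
    and even_only :: bool
    and m \<mu> :: "'k \<Rightarrow> (real^'n) measure"
  assumes p_pos: "p > 0"
    and c_hom: "homogeneous_cost p c"
    and c_meas: "c \<in> borel_measurable borel"
    and \<rho>_nonneg: "\<And>i x. \<rho> i x \<ge> 0"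
    and \<rho>_meas: "\<And>i. \<rho> i \<in> borel_measurable borel"
    and \<rho>_hom: "\<And>i. homogeneous_density (r i) (\<rho> i)"
    and r_nonneg: "\<And>i. r i \<ge> 0"
    and \<alpha>_pos: "\<And>i. \<alpha> i > 0"
    and m_def: "\<And>i. m i = density lborel (\<lambda>x. ennreal (\<rho> i x))"
    and \<Phi>_adm: "admissible c \<Phi>"
    and \<Phi>_meas: "\<And>i. \<Phi> i \<in> borel_measurable borel"
    and \<Phi>_even: "even_only \<Longrightarrow> (\<forall>i x. \<Phi> i (- x) = \<Phi> i x)"
    and \<Phi>_max: "\<And>V. admissible c V \<Longrightarrow> (\<forall>i. V i \<in> borel_measurable borel) \<Longrightarrow>
                   (even_only \<longrightarrow> (\<forall>i x. V i (- x) = V i x)) \<Longrightarrow> BS \<alpha> m V \<le> BS \<alpha> m \<Phi>"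
    and BS_pos: "0 < BS \<alpha> m \<Phi>"
    and BS_fin: "BS \<alpha> m \<Phi> < \<infinity>"
    and \<mu>_def: "\<And>i. \<mu> i = density (m i) (\<lambda>x. expneg (\<alpha> i) (\<Phi> i x) /
                        (\<integral>\<^sup>+ y. expneg (\<alpha> i) (\<Phi> i y) \<partial>m i))"
begin

definition Z :: "'k \<Rightarrow> real \<Rightarrow> ennreal" where
  "Z i s = (\<integral>\<^sup>+x. expneg (\<alpha> i * s) (\<Phi> i x) \<partial>m i)"

lemma sets_m [measurable_cong]: "sets (m i) = sets borel"
  by (simp add: m_def)

lemma sets_\<mu> [measurable_cong]: "sets (\<mu> i) = sets borel"
  by (simp add: \<mu>_def m_def)

lemma nn_integral_expneg_dilate_\<Phi>:
  assumes "0 < t"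
  shows "(\<integral>\<^sup>+x. expneg (\<alpha> i) (dilate p t \<Phi> i x) \<partial>m i)
     = ennreal (t powr (real CARD('n) + r i)) * Z i (t powr p)"
  using nn_integral_expneg_dilate[where a = "\<alpha> i" and p = p, OF assms \<rho>_meas \<Phi>_meas \<rho>_nonneg \<rho>_hom]
  by (simp add: dilate_def Z_def m_def)

lemma BS_dilate_le: "0 < t \<Longrightarrow> BS \<alpha> m (dilate p t \<Phi>) \<le> BS \<alpha> m \<Phi>"
proof (rule \<Phi>_max)
  assume t: "0 < t"
  show "admissible c (dilate p t \<Phi>)"
    using t c_hom \<Phi>_adm by (rule admissible_dilate)
  show "\<forall>i. dilate p t \<Phi> i \<in> borel_measurable borel"
    using \<Phi>_meas by (simp add: dilate_def[abs_def])
  show "even_only \<longrightarrow> (\<forall>i x. dilate p t \<Phi> i (- x) = dilate p t \<Phi> i x)"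
    using \<Phi>_even by (simp add: dilate_def)
qed

lemma Z_1: "Z i 1 = (\<integral>\<^sup>+x. expneg (\<alpha> i) (\<Phi> i x) \<partial>m i)"
  by (simp add: Z_def)

lemma BS_\<Phi>: "BS \<alpha> m \<Phi> = (\<Prod>i\<in>UNIV. enn_powr (Z i 1) (1 / \<alpha> i))"
  by (simp add: BS_def Z_1)

lemma Z_eq_0_iff: "Z i s = 0 \<longleftrightarrow> (AE x in m i. \<Phi> i x = \<infinity>)"
  unfolding Z_def m_def using \<Phi>_meas by (subst nn_integral_0_iff_AE) (auto simp: expneg_eq_0_iff)

lemma Z_neq_0: "Z i s \<noteq> 0"
proof -
  have "BS \<alpha> m \<Phi> \<noteq> 0"
    using BS_pos by simp
  then have "Z i 1 \<noteq> 0"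
    by (simp add: BS_\<Phi> enn_powr_eq_0_iff)
  then show ?thesis
    by (simp add: Z_eq_0_iff)
qed

lemma Z_neq_top:
  assumes "0 < s"
  shows "Z i s \<noteq> \<top>"
proof
  assume "Z i s = \<top>"
  define t where "t = s powr (1 / p)"
  have t: "0 < t" "t powr p = s"
    using assms p_pos by (simp_all add: t_def powr_powr)
  have "BS \<alpha> m (dilate p t \<Phi>) = \<top>"
    unfolding BS_def nn_integral_expneg_dilate_\<Phi>[OF t(1)] t(2) using \<open>Z i s = \<top>\<close> t
    by (subst ennreal_prod_eq_top) (auto simp: enn_powr_eq_0_iff enn_powr_eq_top_iff Z_neq_0 ennreal_mult_eq_top_iff)
  then show False
    using BS_dilate_le[OF t(1)] BS_fin by (simp add: top_unique)
qed

definition z :: "'k \<Rightarrow> real \<Rightarrow> real" where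
  "z i s = enn2real (Z i s)"

lemma Z_eq_ennreal: "0 < s \<Longrightarrow> Z i s = ennreal (z i s)"
  using Z_neq_top by (simp add: z_def ennreal_enn2real_if)

lemma z_pos: "0 < s \<Longrightarrow> 0 < z i s"
  using Z_neq_0 Z_neq_top by (simp add: z_def enn2real_positive_iff less_top zero_less_iff_neq_zero)

lemma sum_ln_z_le:
  assumes s: "0 < s"
  shows "(\<Sum>i\<in>UNIV. ln (z i s / z i 1) / \<alpha> i) \<le> - (\<Sum>i\<in>UNIV. (real CARD('n) + r i) / (p * \<alpha> i)) * ln s"
proof -
  define t where "t = s powr (1 / p)"
  have t: "0 < t" "t powr p = s"
    using s p_pos by (simp_all add: t_def powr_powr)
  then have ln_s: "ln s = p * ln t"
    using ln_powr[of t p] by simp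
  define w where "w i = t powr (real CARD('n) + r i) * z i s" for i
  have w: "0 < w i" for i
    using t z_pos[OF s] by (simp add: w_def)
  have "BS \<alpha> m (dilate p t \<Phi>) = ennreal (\<Prod>i\<in>UNIV. w i powr (1 / \<alpha> i))"
    using less_imp_le[OF w] by (intro BS_eq_ennreal)
      (simp_all add: nn_integral_expneg_dilate_\<Phi> t Z_eq_ennreal[OF s] w_def ennreal_mult')
  moreover have "BS \<alpha> m \<Phi> = ennreal (\<Prod>i\<in>UNIV. z i 1 powr (1 / \<alpha> i))"
    using z_pos[of 1] by (intro BS_eq_ennreal) (simp_all add: Z_1[symmetric] Z_eq_ennreal less_imp_le)
  ultimately have "(\<Prod>i\<in>UNIV. w i powr (1 / \<alpha> i)) \<le> (\<Prod>i\<in>UNIV. z i 1 powr (1 / \<alpha> i))"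
    using BS_dilate_le[OF t(1)] by (simp add: prod_nonneg)
  then have "ln (\<Prod>i\<in>UNIV. w i powr (1 / \<alpha> i)) \<le> ln (\<Prod>i\<in>UNIV. z i 1 powr (1 / \<alpha> i))"
    using w by (intro ln_mono prod_pos) (simp_all add: less_imp_neq[symmetric])
  then have "(\<Sum>i\<in>UNIV. 1 / \<alpha> i * ln (w i)) \<le> (\<Sum>i\<in>UNIV. 1 / \<alpha> i * ln (z i 1))"
    using w z_pos[of 1] by (simp add: ln_prod_powr)
  moreover have "ln (z i s / z i 1) / \<alpha> i = 1 / \<alpha> i * ln (w i) - 1 / \<alpha> i * ln (z i 1)
      - (real CARD('n) + r i) / (p * \<alpha> i) * ln s" for i
    using t z_pos[OF s, of i] z_pos[of 1 i] p_pos \<alpha>_pos[of i]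
    by (simp add: w_def ln_s ln_mult ln_powr ln_div field_simps)
  then have "(\<Sum>i\<in>UNIV. ln (z i s / z i 1) / \<alpha> i) = (\<Sum>i\<in>UNIV. 1 / \<alpha> i * ln (w i))
      - (\<Sum>i\<in>UNIV. 1 / \<alpha> i * ln (z i 1)) - (\<Sum>i\<in>UNIV. (real CARD('n) + r i) / (p * \<alpha> i)) * ln s"
    by (simp add: sum_subtractf sum_distrib_right)
  ultimately show ?thesis
    by linarith
qed

text \<open>The junk value \<open>real_of_ereal \<infinity> = 0\<close> on \<open>{\<Phi>\<^sub>i = \<infinity>}\<close> is harmless: the density
  \<open>expneg\<close> of \<open>\<mu>\<^sub>i\<close> vanishes there, which is why \<open>expneg_mult_exp\<close> holds for all \<open>v\<close>.\<close>

lemma nn_integral_exp_\<mu>: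
  "(\<integral>\<^sup>+x. ennreal (exp (- \<alpha> i * h * real_of_ereal (\<Phi> i x))) \<partial>\<mu> i) = Z i (1 + h) / Z i 1"
proof -
  have [measurable]: "\<Phi> i \<in> borel_measurable (m i)"
    using \<Phi>_meas[of i] by (simp add: measurable_cong_sets[OF sets_m refl])
  have "(\<integral>\<^sup>+x. ennreal (exp (- \<alpha> i * h * real_of_ereal (\<Phi> i x))) \<partial>\<mu> i)
      = (\<integral>\<^sup>+x. expneg (\<alpha> i) (\<Phi> i x) * ennreal (exp (- \<alpha> i * h * real_of_ereal (\<Phi> i x))) / Z i 1 \<partial>m i)"
    unfolding \<mu>_def Z_1[symmetric] by (simp add: nn_integral_density ennreal_times_divide mult.commute)
  also have "\<dots> = (\<integral>\<^sup>+x. expneg (\<alpha> i * (1 + h)) (\<Phi> i x) / Z i 1 \<partial>m i)"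
    by (simp only: expneg_mult_exp)
  also have "\<dots> = Z i (1 + h) / Z i 1"
    unfolding Z_def by (simp add: nn_integral_divide)
  finally show ?thesis .
qed

lemma prob_space_\<mu>: "prob_space (\<mu> i)"
proof
  have "(\<integral>\<^sup>+x. 1 \<partial>\<mu> i) = 1"
    using nn_integral_exp_\<mu>[of i 0] Z_neq_0[of i 1] Z_neq_top[of 1 i] by (simp add: ennreal_divide_self less_top)
  then show "emeasure (\<mu> i) (space (\<mu> i)) = 1"
    by simp
qed

lemma integrable_exp_\<mu>:
  assumes "-1 < h"
  shows "integrable (\<mu> i) (\<lambda>x. exp (- \<alpha> i * h * real_of_ereal (\<Phi> i x)))"
    and "(\<integral>x. exp (- \<alpha> i * h * real_of_ereal (\<Phi> i x)) \<partial>\<mu> i) = z i (1 + h) / z i 1"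
proof -
  have "0 < 1 + h"
    using assms by simp
  then have eq: "(\<integral>\<^sup>+x. ennreal (exp (- \<alpha> i * h * real_of_ereal (\<Phi> i x))) \<partial>\<mu> i) = ennreal (z i (1 + h) / z i 1)"
    unfolding nn_integral_exp_\<mu> using z_pos[of "1 + h" i] z_pos[of 1 i] by (simp add: Z_eq_ennreal divide_ennreal)
  have [measurable]: "\<Phi> i \<in> borel_measurable (\<mu> i)"
    using \<Phi>_meas[of i] by (simp add: measurable_cong_sets[OF sets_\<mu> refl])
  show "integrable (\<mu> i) (\<lambda>x. exp (- \<alpha> i * h * real_of_ereal (\<Phi> i x)))"
    using eq by (intro integrableI_nn_integral_finite) auto
  show "(\<integral>x. exp (- \<alpha> i * h * real_of_ereal (\<Phi> i x)) \<partial>\<mu> i) = z i (1 + h) / z i 1"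
    using eq z_pos[of "1 + h" i] z_pos[of 1 i] \<open>0 < 1 + h\<close>
    by (subst integral_eq_nn_integral) auto
qed

sublocale log_Laplace_bound \<mu> "\<lambda>i x. real_of_ereal (\<Phi> i x)" \<alpha> "\<Sum>i\<in>UNIV. (real CARD('n) + r i) / (p * \<alpha> i)"
proof (rule log_Laplace_bound.intro)
  show "(\<lambda>x. real_of_ereal (\<Phi> i x)) \<in> borel_measurable (\<mu> i)" for i
    using \<Phi>_meas[of i] by (simp add: measurable_cong_sets[OF sets_\<mu> refl])
  show "0 \<le> (\<Sum>i\<in>UNIV. (real CARD('n) + r i) / (p * \<alpha> i))"
    using p_pos \<alpha>_pos r_nonneg by (intro sum_nonneg) (simp add: less_imp_le)
  fix h :: real
  assume h: "-1 < h"
  show "integrable (\<mu> i) (\<lambda>x. exp (- \<alpha> i * h * real_of_ereal (\<Phi> i x)))" for i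
    using h by (rule integrable_exp_\<mu>)
  show "(\<Sum>i\<in>UNIV. ln (\<integral>x. exp (- \<alpha> i * h * real_of_ereal (\<Phi> i x)) \<partial>\<mu> i) / \<alpha> i)
      \<le> - (\<Sum>i\<in>UNIV. (real CARD('n) + r i) / (p * \<alpha> i)) * ln (1 + h)"
    unfolding integrable_exp_\<mu>(2)[OF h] using sum_ln_z_le[of "1 + h"] h by simp
qed (fact prob_space_\<mu> \<alpha>_pos)+

lemma optimal_coupling_cost:
  fixes \<gamma> :: "(real^'n^'k) measure"
  assumes "prob_space \<gamma>" and sets_\<gamma>: "sets \<gamma> = sets borel"
    and marginal: "\<forall>i. distr \<gamma> borel (\<lambda>x. x $ i) = \<mu> i"
    and optimal: "AE x in \<gamma>. (\<Sum>i\<in>UNIV. \<Phi> i (x $ i)) = ereal (c x)"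
  shows "integrable \<gamma> c \<and> integrable \<gamma> (\<lambda>x. (c x)\<^sup>2)
    \<and> (\<integral>x. c x \<partial>\<gamma>) = (\<Sum>i\<in>UNIV. (real CARD('n) + r i) / (p * \<alpha> i))
    \<and> Var \<gamma> c \<le> (\<Sum>i\<in>UNIV. 1 / \<alpha> i) * (\<Sum>i\<in>UNIV. \<alpha> i * Var (\<mu> i) (\<lambda>x. real_of_ereal (\<Phi> i x)))
    \<and> (Var \<gamma> c = (\<Sum>i\<in>UNIV. 1 / \<alpha> i) * (\<Sum>i\<in>UNIV. \<alpha> i * Var (\<mu> i) (\<lambda>x. real_of_ereal (\<Phi> i x)))
       \<longleftrightarrow> (AE x in \<gamma>. \<forall>i j.
             \<alpha> i * (real_of_ereal (\<Phi> i (x $ i)) - (\<integral>y. real_of_ereal (\<Phi> i y) \<partial>\<mu> i))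
           = \<alpha> j * (real_of_ereal (\<Phi> j (x $ j)) - (\<integral>y. real_of_ereal (\<Phi> j y) \<partial>\<mu> j))))"
proof -
  have component: "(\<lambda>x. x $ i) \<in> \<gamma> \<rightarrow>\<^sub>M borel" for i
    unfolding measurable_cong_sets[OF sets_\<gamma> refl]
    by (intro borel_measurable_continuous_onI continuous_on_component continuous_on_id)
  have c: "c \<in> borel_measurable \<gamma>"
    using c_meas by (simp add: measurable_cong_sets[OF sets_\<gamma> refl])
  have \<phi>: "(\<lambda>x. real_of_ereal (\<Phi> i x)) \<in> borel_measurable borel" for i
    using \<Phi>_meas[of i] by measurable
  have c_eq: "AE x in \<gamma>. c x = (\<Sum>i\<in>UNIV. real_of_ereal (\<Phi> i (x $ i)))"
    using optimal
  proof eventually_elim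
    case (elim x)
    then have "\<bar>\<Phi> i (x $ i)\<bar> \<noteq> \<infinity>" for i
      using sum_Inf[of "\<lambda>i. \<Phi> i (x $ i)" UNIV] by auto
    then show ?case
      using elim by (simp add: sum_real_of_ereal)
  qed
  note moments = coupling_cost_moments[where \<phi> = "\<lambda>i x. real_of_ereal (\<Phi> i x)" and c = c and \<alpha> = \<alpha>,
      OF assms(1) component marginal[rule_format] \<phi> integrable_\<phi> integrable_\<phi>_square c c_eq \<alpha>_pos]
  show ?thesis
    using moments(1,2,4,5) moments(3)[unfolded sum_expectation_eq] by blast
qed

end

theorem lemma3p1:
  fixes c :: "real^'n^'k \<Rightarrow> real"
    and p :: real
    and \<rho> :: "'k \<Rightarrow> real^'n \<Rightarrow> real"
    and r \<alpha> :: "'k \<Rightarrow> real"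
    and \<Phi> :: "'k \<Rightarrow> real^'n \<Rightarrow> ereal"
    and even_only :: bool
    and m \<mu> :: "'k \<Rightarrow> (real^'n) measure"
  assumes p_pos: "p > 0"
    and c_hom: "homogeneous_cost p c"
    and c_meas: "c \<in> borel_measurable borel"
    and \<rho>_nonneg: "\<And>i x. \<rho> i x \<ge> 0"
    and \<rho>_meas: "\<And>i. \<rho> i \<in> borel_measurable borel"
    and \<rho>_hom: "\<And>i. homogeneous_density (r i) (\<rho> i)"
    and r_nonneg: "\<And>i. r i \<ge> 0"
    and \<alpha>_pos: "\<And>i. \<alpha> i > 0"
    and m_def: "\<And>i. m i = density lborel (\<lambda>x. ennreal (\<rho> i x))"
    and \<Phi>_adm: "admissible c \<Phi>"
    and \<Phi>_meas: "\<And>i. \<Phi> i \<in> borel_measurable borel"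
    and \<Phi>_even: "even_only \<Longrightarrow> (\<forall>i x. \<Phi> i (- x) = \<Phi> i x)"
    and \<Phi>_max: "\<And>V. admissible c V \<Longrightarrow> (\<forall>i. V i \<in> borel_measurable borel) \<Longrightarrow>
                   (even_only \<longrightarrow> (\<forall>i x. V i (- x) = V i x)) \<Longrightarrow> BS \<alpha> m V \<le> BS \<alpha> m \<Phi>"
    and BS_pos: "0 < BS \<alpha> m \<Phi>"
    and BS_fin: "BS \<alpha> m \<Phi> < \<infinity>"
    and \<mu>_def: "\<And>i. \<mu> i = density (m i) (\<lambda>x. expneg (\<alpha> i) (\<Phi> i x) /
                        (\<integral>\<^sup>+ y. expneg (\<alpha> i) (\<Phi> i y) \<partial>m i))"
  shows
    "(\<forall>i. integrable (\<mu> i) (\<lambda>x. real_of_ereal (\<Phi> i x)) \<and>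
          integrable (\<mu> i) (\<lambda>x. (real_of_ereal (\<Phi> i x))\<^sup>2))
     \<and> (\<Sum>i\<in>UNIV. \<integral>x. real_of_ereal (\<Phi> i x) \<partial>\<mu> i)
         = (\<Sum>i\<in>UNIV. (real CARD('n) + r i) / (p * \<alpha> i))
     \<and> (\<Sum>i\<in>UNIV. \<alpha> i * Var (\<mu> i) (\<lambda>x. real_of_ereal (\<Phi> i x)))
         \<le> (\<Sum>i\<in>UNIV. (real CARD('n) + r i) / (p * \<alpha> i))
     \<and> (\<forall>\<gamma> :: (real^'n^'k) measure.
          prob_space \<gamma> \<longrightarrow> sets \<gamma> = sets borel \<longrightarrow>
          (\<forall>i. distr \<gamma> borel (\<lambda>x. x $ i) = \<mu> i) \<longrightarrow>
          (AE x in \<gamma>. (\<Sum>i\<in>UNIV. \<Phi> i (x $ i)) = ereal (c x)) \<longrightarrow>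
            integrable \<gamma> c \<and> integrable \<gamma> (\<lambda>x. (c x)\<^sup>2)
            \<and> (\<integral>x. c x \<partial>\<gamma>) = (\<Sum>i\<in>UNIV. (real CARD('n) + r i) / (p * \<alpha> i))
            \<and> Var \<gamma> c \<le> (\<Sum>i\<in>UNIV. 1 / \<alpha> i) *
                 (\<Sum>i\<in>UNIV. \<alpha> i * Var (\<mu> i) (\<lambda>x. real_of_ereal (\<Phi> i x)))
            \<and> (Var \<gamma> c = (\<Sum>i\<in>UNIV. 1 / \<alpha> i) *
                 (\<Sum>i\<in>UNIV. \<alpha> i * Var (\<mu> i) (\<lambda>x. real_of_ereal (\<Phi> i x)))
               \<longleftrightarrow> (AE x in \<gamma>. \<forall>i j.
                     \<alpha> i * (real_of_ereal (\<Phi> i (x $ i)) - (\<integral>y. real_of_ereal (\<Phi> i y) \<partial>\<mu> i))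
                   = \<alpha> j * (real_of_ereal (\<Phi> j (x $ j)) - (\<integral>y. real_of_ereal (\<Phi> j y) \<partial>\<mu> j)))))"
proof -
  interpret BS_maximizer c p \<rho> r \<alpha> \<Phi> even_only m \<mu>
    by (rule BS_maximizer.intro) (fact assms)+
  show ?thesis
    using integrable_\<phi> integrable_\<phi>_square sum_expectation_eq sum_weighted_Var_le optimal_coupling_cost
    by blast
qed

end
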